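(* For each $n\ge 2$, the number of non-periodic diameter-$4$ perfect Lee codes in $Z^n$ is $2^{\aleph_0}$.
   Context: Lee distance on $Z^n$: $\rho_L(v,w)=\sum_i|v_i-w_i|$; $S_{n,1}(v)=\{w:\rho_L(v,w)\le1\}$; for $\rho_L(v,w)=1$ the double-sphere is $DS_{n,1}(v,w)=S_{n,1}(v)\cup S_{n,1}(w)$. A copy of a set is its image under a linear distance-preserving bijection of $Z^n$; a tiling is a family of pairwise disjoint copies covering $Z^n$. A diameter-$4$ perfect Lee code in $Z^n$ is a set $\mathcal{L}$ with pairwise Lee distances $\ge 4$ such that there is a tiling of $Z^n$ by copies of $DS_{n,1}$ in which each tile contains exactly one element of $\mathcal{L}$ and distinct tiles contain distinct elements. A set $\mathcal{S}\subset Z^n$ is periodic if there is $p>0$ with $s\in\mathcal{S}\iff s+pe_i\in\mathcal{S}$ for all $i=1,\dots,n$; otherwise it is non-periodic. *)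

theory Defs
  imports Main "HOL-Library.Equipollence"
begin

text \<open>Points of Z^n are functions from a finite index type 'n (with CARD('n) = n) to int.\<close>

definition lee_dist :: "('n::finite \<Rightarrow> int) \<Rightarrow> ('n \<Rightarrow> int) \<Rightarrow> int" where
  "lee_dist v w = (\<Sum>i\<in>UNIV. \<bar>v i - w i\<bar>)"

definition lee_sphere1 :: "('n::finite \<Rightarrow> int) \<Rightarrow> ('n \<Rightarrow> int) set" where
  "lee_sphere1 v = {w. lee_dist v w \<le> 1}"

definition double_sphere :: "('n::finite \<Rightarrow> int) \<Rightarrow> ('n \<Rightarrow> int) \<Rightarrow> ('n \<Rightarrow> int) set" where
  "double_sphere v w = lee_sphere1 v \<union> lee_sphere1 w"

definition lee_isometry :: "(('n::finite \<Rightarrow> int) \<Rightarrow> ('n \<Rightarrow> int)) \<Rightarrow> bool" where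
  "lee_isometry f \<longleftrightarrow> bij f \<and> (\<forall>v w. lee_dist (f v) (f w) = lee_dist v w)"

definition ds_copy :: "('n::finite \<Rightarrow> int) set \<Rightarrow> bool" where
  "ds_copy T \<longleftrightarrow> (\<exists>f v w. lee_isometry f \<and> lee_dist v w = 1 \<and> T = f ` double_sphere v w)"

definition ds_tiling :: "('n::finite \<Rightarrow> int) set set \<Rightarrow> bool" where
  "ds_tiling \<T> \<longleftrightarrow> (\<forall>T\<in>\<T>. ds_copy T)
     \<and> (\<forall>T1\<in>\<T>. \<forall>T2\<in>\<T>. T1 \<noteq> T2 \<longrightarrow> T1 \<inter> T2 = {})
     \<and> \<Union>\<T> = UNIV"

definition diam4_perfect_lee_code :: "('n::finite \<Rightarrow> int) set \<Rightarrow> bool" where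
  "diam4_perfect_lee_code L \<longleftrightarrow>
     (\<forall>x\<in>L. \<forall>y\<in>L. x \<noteq> y \<longrightarrow> lee_dist x y \<ge> 4)
     \<and> (\<exists>\<T>. ds_tiling \<T>
           \<and> (\<forall>T\<in>\<T>. \<exists>!c. c \<in> L \<and> c \<in> T)
           \<and> (\<forall>T1\<in>\<T>. \<forall>T2\<in>\<T>. \<forall>c1 c2. T1 \<noteq> T2 \<and> c1 \<in> L \<inter> T1 \<and> c2 \<in> L \<inter> T2 \<longrightarrow> c1 \<noteq> c2))"

definition unit_vec :: "'n \<Rightarrow> ('n \<Rightarrow> int)" where
  "unit_vec i = (\<lambda>j. if j = i then 1 else 0)"

definition periodic_set :: "('n::finite \<Rightarrow> int) set \<Rightarrow> bool" where
  "periodic_set S \<longleftrightarrow> (\<exists>p::int. p > 0 \<and>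
     (\<forall>s i. s \<in> S \<longleftrightarrow> (\<lambda>j. s j + p * unit_vec i j) \<in> S))"

end

theory Submission
  imports Defs "HOL-Library.Function_Algebras" "HOL-Library.Countable"
begin

text \<open>Number the coordinates 0, ..., n-1 and give coordinate k the weight 2k+1 and the sign
  (-1)^k. The translates of the double sphere DS(0, e_0) along the lattice
  \<Lambda> = {x. 4n divides \<Sum> (2k+1) x_k} tile Z^n, because the weighted sums of its 4n points
  represent every residue modulo 4n; moreover \<Lambda> has minimum Lee norm 4.
  A perfect code picks one point in each tile. Picking v or v + e_0 + e_1 in the tile of
  v \<in> \<Lambda> works for every rule that depends only on the alternating sum \<Sum> (-1)^k v_k,
  since a vector of Lee norm at most 3 whose weighted sum is divisible by 4 has alternating
  sum 0. Letting the rule encode a set A of naturals through the values 4n(a+1), a \<in> A,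
  while always shifting at alternating sum 0 and never at negative sums, yields continuum many
  distinct codes. None is periodic: a period would carry the codeword -4np e_0 to the
  origin, which is not a codeword. Conversely, Z^n is countable.\<close>

definition lee_norm :: "('n::finite \<Rightarrow> int) \<Rightarrow> int" where
  "lee_norm x = (\<Sum>i\<in>UNIV. \<bar>x i\<bar>)"

definition dot :: "('n::finite \<Rightarrow> int) \<Rightarrow> ('n \<Rightarrow> int) \<Rightarrow> int" where
  "dot c x = (\<Sum>i\<in>UNIV. c i * x i)"

lemma lee_dist_eq_lee_norm: "lee_dist v w = lee_norm (v - w)"
  by (simp add: lee_dist_def lee_norm_def)

lemma lee_dist_sym: "lee_dist v w = lee_dist w v"
  by (simp add: lee_dist_def abs_minus_commute)

lemma lee_dist_triangle: "lee_dist u w \<le> lee_dist u v + lee_dist v w"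
  unfolding lee_dist_def sum.distrib[symmetric] by (rule sum_mono) simp

lemma lee_norm_nonneg: "0 \<le> lee_norm x"
  by (simp add: lee_norm_def sum_nonneg)

lemma lee_norm_eq_0_iff: "lee_norm x = 0 \<longleftrightarrow> x = 0"
  by (simp add: lee_norm_def sum_nonneg_eq_0_iff fun_eq_iff)

lemma lee_norm_unit_vec: "lee_norm (unit_vec i) = 1"
proof -
  have "lee_norm (unit_vec i) = (\<Sum>j\<in>UNIV. if j = i then 1 else 0)"
    unfolding lee_norm_def by (rule sum.cong) (auto simp: unit_vec_def)
  then show ?thesis
    by simp
qed

lemma lee_norm_minus: "lee_norm (- x) = lee_norm x"
  by (simp add: lee_norm_def)

lemma lee_sphere1_iff: "u \<in> lee_sphere1 v \<longleftrightarrow> lee_norm (u - v) \<le> 1"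
  by (simp add: lee_sphere1_def lee_dist_def lee_norm_def abs_minus_commute)

lemma lee_dist_0_unit_vec: "lee_dist 0 (unit_vec i) = 1"
  using lee_norm_minus[of "unit_vec i"] by (simp add: lee_dist_eq_lee_norm lee_norm_unit_vec)

lemma lee_norm_remove: "lee_norm x = \<bar>x i\<bar> + (\<Sum>j\<in>UNIV - {i}. \<bar>x j\<bar>)"
  unfolding lee_norm_def by (rule sum.remove) auto

lemma lee_norm_diff_sgn_unit_vec:
  assumes "x i \<noteq> 0"
  shows "lee_norm (x - (\<lambda>j. sgn (x i) * unit_vec i j)) = lee_norm x - 1"
proof -
  let ?y = "x - (\<lambda>j. sgn (x i) * unit_vec i j)"
  have "\<bar>?y i\<bar> = \<bar>x i\<bar> - 1"
    using assms by (auto simp: sgn_if unit_vec_def)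
  moreover have "(\<Sum>j\<in>UNIV - {i}. \<bar>?y j\<bar>) = (\<Sum>j\<in>UNIV - {i}. \<bar>x j\<bar>)"
    by (rule sum.cong) (auto simp: unit_vec_def)
  ultimately have "lee_norm ?y = (\<bar>x i\<bar> - 1) + (\<Sum>j\<in>UNIV - {i}. \<bar>x j\<bar>)"
    using lee_norm_remove[of ?y i] by linarith
  then show ?thesis
    using lee_norm_remove[of x i] by linarith
qed

lemma lee_norm_eq_1E:
  assumes "lee_norm x = 1"
  obtains i s where "\<bar>s\<bar> = 1" "x = (\<lambda>j. s * unit_vec i j)"
proof -
  obtain i where i: "x i \<noteq> 0"
    using assms lee_norm_eq_0_iff[of x] by fastforce
  then have "lee_norm (x - (\<lambda>j. sgn (x i) * unit_vec i j)) = 0"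
    using assms by (simp add: lee_norm_diff_sgn_unit_vec)
  then have "x = (\<lambda>j. sgn (x i) * unit_vec i j)"
    by (simp add: lee_norm_eq_0_iff)
  with i show ?thesis
    by (intro that[of "sgn (x i)" i]) (auto simp: sgn_if)
qed

lemma lee_norm_eq_2E:
  assumes "lee_norm x = 2"
  obtains i j s t where "\<bar>s\<bar> = 1" "\<bar>t\<bar> = 1"
    "x = (\<lambda>k. s * unit_vec i k) + (\<lambda>k. t * unit_vec j k)"
proof -
  obtain i where i: "x i \<noteq> 0"
    using assms lee_norm_eq_0_iff[of x] by fastforce
  then have "lee_norm (x - (\<lambda>k. sgn (x i) * unit_vec i k)) = 1"
    using assms by (simp add: lee_norm_diff_sgn_unit_vec)
  then obtain j t where "\<bar>t\<bar> = 1" "x - (\<lambda>k. sgn (x i) * unit_vec i k) = (\<lambda>k. t * unit_vec j k)"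
    by (rule lee_norm_eq_1E)
  with i show ?thesis
    by (intro that[of "sgn (x i)" t i j]) (auto simp: sgn_if algebra_simps)
qed

lemma dot_add: "dot c (x + y) = dot c x + dot c y"
  by (simp add: dot_def distrib_left sum.distrib)

lemma dot_zero: "dot c 0 = 0"
  by (simp add: dot_def)

lemma dot_diff: "dot c (x - y) = dot c x - dot c y"
  by (simp add: dot_def right_diff_distrib sum_subtractf)

lemma dot_minus: "dot c (- x) = - dot c x"
  by (simp add: dot_def sum_negf)

lemma dot_scaled_unit_vec: "dot c (\<lambda>j. s * unit_vec i j) = s * c i"
  by (simp add: dot_def unit_vec_def if_distrib cong: if_cong)

lemma dot_unit_vec: "dot c (unit_vec i) = c i"
  using dot_scaled_unit_vec[of c 1 i] by simp

lemma abs_dot_le: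
  assumes "\<And>i. \<bar>c i\<bar> \<le> b"
  shows "\<bar>dot c x\<bar> \<le> b * lee_norm x"
proof -
  have "\<bar>dot c x\<bar> \<le> (\<Sum>i\<in>UNIV. \<bar>c i\<bar> * \<bar>x i\<bar>)"
    unfolding dot_def abs_mult[symmetric] by (rule sum_abs)
  also have "\<dots> \<le> (\<Sum>i\<in>UNIV. b * \<bar>x i\<bar>)"
    by (intro sum_mono mult_right_mono assms) simp
  finally show ?thesis
    by (simp add: lee_norm_def sum_distrib_left)
qed

lemma dvd_dot_diff:
  assumes "\<And>i. m dvd c i - c' i"
  shows "m dvd dot c x - dot c' x"
proof -
  have "dot c x - dot c' x = (\<Sum>i\<in>UNIV. (c i - c' i) * x i)"
    by (simp add: dot_def left_diff_distrib sum_subtractf)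
  then show ?thesis
    by (simp add: assms dvd_sum)
qed

lemma even_dot_diff_lee_norm:
  assumes "\<And>i. odd (c i)"
  shows "even (dot c x - lee_norm x)"
proof -
  have "dot c x - lee_norm x = (\<Sum>i\<in>UNIV. c i * x i - \<bar>x i\<bar>)"
    by (simp add: dot_def lee_norm_def sum_subtractf)
  moreover have "even (c i * x i - \<bar>x i\<bar>)" for i
    using assms[of i] by (cases "x i \<ge> 0") auto
  ultimately show ?thesis
    by (simp add: dvd_sum)
qed

lemma double_sphere_diam:
  assumes "lee_dist v w = 1" "x \<in> double_sphere v w" "y \<in> double_sphere v w"
  shows "lee_dist x y \<le> 3"
  using assms lee_dist_triangle[of x y v] lee_dist_triangle[of x y w]
    lee_dist_triangle[of x w v] lee_dist_triangle[of v y w] lee_dist_triangle[of w y v]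
    lee_dist_sym[of x v] lee_dist_sym[of x w] lee_dist_sym[of v w]
  by (auto simp: double_sphere_def lee_sphere1_def)

lemma lee_isometry_translate: "lee_isometry (\<lambda>x. v + x)"
proof -
  have "bij (\<lambda>x. v + x)"
    by (rule bij_betw_byWitness[where f' = "\<lambda>x. x - v"]) auto
  then show ?thesis
    by (simp add: lee_isometry_def lee_dist_def)
qed

lemma lee_isometry_comp: "lee_isometry f \<Longrightarrow> lee_isometry g \<Longrightarrow> lee_isometry (f \<circ> g)"
  by (simp add: lee_isometry_def bij_comp)

lemma ds_copy_translate:
  assumes "ds_copy D"
  shows "ds_copy ((\<lambda>x. v + x) ` D)"
proof -
  obtain f a b where "lee_isometry f" "lee_dist a b = 1" "D = f ` double_sphere a b"
    using assms by (auto simp: ds_copy_def)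
  moreover have "(\<lambda>x. v + x) ` D = ((\<lambda>x. v + x) \<circ> f) ` double_sphere a b"
    using \<open>D = f ` double_sphere a b\<close> by (simp add: image_comp)
  ultimately show ?thesis
    unfolding ds_copy_def by (meson lee_isometry_comp lee_isometry_translate)
qed

definition translate_tiling :: "('n::finite \<Rightarrow> int) set \<Rightarrow> ('n \<Rightarrow> int) set \<Rightarrow> bool" where
  "translate_tiling \<Lambda> D \<longleftrightarrow> (\<forall>x. \<exists>v\<in>\<Lambda>. \<exists>u\<in>D. x = v + u)
     \<and> (\<forall>v\<in>\<Lambda>. \<forall>w\<in>\<Lambda>. \<forall>u\<in>D. \<forall>u'\<in>D. v + u = w + u' \<longrightarrow> v = w)"

lemma translate_tiling_unique:
  assumes "translate_tiling \<Lambda> D" "v \<in> \<Lambda>" "w \<in> \<Lambda>" "u \<in> D" "u' \<in> D" "v + u = w + u'"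
  shows "v = w" and "u = u'"
proof -
  show "v = w"
    using assms unfolding translate_tiling_def by blast
  with assms(6) show "u = u'"
    by simp
qed

lemma ds_tiling_translates:
  assumes tiling: "translate_tiling \<Lambda> D" and "ds_copy D"
  shows "ds_tiling {(\<lambda>x. v + x) ` D | v. v \<in> \<Lambda>}"
  unfolding ds_tiling_def
proof (intro conjI ballI impI)
  fix T1 T2
  assume "T1 \<in> {(\<lambda>x. v + x) ` D | v. v \<in> \<Lambda>}" "T2 \<in> {(\<lambda>x. v + x) ` D | v. v \<in> \<Lambda>}"
    and ne: "T1 \<noteq> T2"
  then obtain v w where "v \<in> \<Lambda>" "w \<in> \<Lambda>" "T1 = (\<lambda>x. v + x) ` D" "T2 = (\<lambda>x. w + x) ` D"
    by blast
  with ne translate_tiling_unique(1)[OF tiling] show "T1 \<inter> T2 = {}"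
    by blast
next
  show "ds_copy T" if "T \<in> {(\<lambda>x. v + x) ` D | v. v \<in> \<Lambda>}" for T
    using that \<open>ds_copy D\<close> ds_copy_translate by auto
  show "\<Union>{(\<lambda>x. v + x) ` D | v. v \<in> \<Lambda>} = UNIV"
    using tiling by (fastforce simp: translate_tiling_def)
qed

lemma diam4_perfect_lee_code_of_translate_tiling:
  assumes tiling: "translate_tiling \<Lambda> D" and "ds_copy D"
    and offset: "\<And>v. v \<in> \<Lambda> \<Longrightarrow> c v \<in> D"
    and dist: "\<And>v w. v \<in> \<Lambda> \<Longrightarrow> w \<in> \<Lambda> \<Longrightarrow> v + c v \<noteq> w + c w \<Longrightarrow>
                 4 \<le> lee_dist (v + c v) (w + c w)"
  shows "diam4_perfect_lee_code {v + c v | v. v \<in> \<Lambda>}"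
proof -
  define L where "L = {v + c v | v. v \<in> \<Lambda>}"
  define \<T> where "\<T> = {(\<lambda>x. v + x) ` D | v. v \<in> \<Lambda>}"
  have "ds_tiling \<T>"
    unfolding \<T>_def using tiling \<open>ds_copy D\<close> by (rule ds_tiling_translates)
  moreover have "\<forall>T\<in>\<T>. \<exists>!l. l \<in> L \<and> l \<in> T"
  proof
    fix T assume "T \<in> \<T>"
    then obtain v where v: "v \<in> \<Lambda>" "T = (\<lambda>x. v + x) ` D"
      by (auto simp: \<T>_def)
    have "l = v + c v" if l: "l \<in> L" "l \<in> T" for l
    proof -
      obtain w u where w: "w \<in> \<Lambda>" "l = w + c w" and u: "u \<in> D" "l = v + u"
        using l v unfolding L_def by blast
      then have "v = w"
        using translate_tiling_unique(1)[OF tiling \<open>v \<in> \<Lambda>\<close> w(1) u(1) offset[OF w(1)]] by simp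
      with w show ?thesis
        by simp
    qed
    moreover have "v + c v \<in> L \<and> v + c v \<in> T"
      using v offset by (auto simp: L_def)
    ultimately show "\<exists>!l. l \<in> L \<and> l \<in> T"
      by blast
  qed
  moreover have "\<forall>T1\<in>\<T>. \<forall>T2\<in>\<T>. \<forall>l1 l2. T1 \<noteq> T2 \<and> l1 \<in> L \<inter> T1 \<and> l2 \<in> L \<inter> T2 \<longrightarrow> l1 \<noteq> l2"
    using \<open>ds_tiling \<T>\<close> unfolding ds_tiling_def by blast
  moreover have "\<forall>x\<in>L. \<forall>y\<in>L. x \<noteq> y \<longrightarrow> 4 \<le> lee_dist x y"
    using dist unfolding L_def by blast
  ultimately show ?thesis
    unfolding diam4_perfect_lee_code_def L_def[symmetric] by blast
qed

lemma periodic_setE: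
  assumes "periodic_set S"
  obtains p :: int where "p > 0" "\<And>s i k. s \<in> S \<Longrightarrow> s + (\<lambda>j. int k * p * unit_vec i j) \<in> S"
proof -
  obtain p :: int where "p > 0" and step: "\<And>s i. s \<in> S \<longleftrightarrow> (\<lambda>j. s j + p * unit_vec i j) \<in> S"
    using assms unfolding periodic_set_def by blast
  have "s + (\<lambda>j. int k * p * unit_vec i j) \<in> S" if "s \<in> S" for s i k
  proof (induction k)
    case 0
    show ?case using that by (simp add: zero_fun_def[symmetric])
  next
    case (Suc k)
    have "s + (\<lambda>j. int (Suc k) * p * unit_vec i j)
        = (\<lambda>j. (s + (\<lambda>j. int k * p * unit_vec i j)) j + p * unit_vec i j)"
      by (simp add: fun_eq_iff algebra_simps)
    with Suc show ?case
      using step by simp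
  qed
  with \<open>p > 0\<close> show ?thesis
    using that by blast
qed

lemma lepoll_nat_set_set: "(X :: 'a::countable set set) \<lesssim> (UNIV :: nat set set)"
  unfolding lepoll_def
  by (rule exI[of _ "image to_nat"]) (auto simp: inj_on_def inj_image_eq_iff[OF inj_to_nat])


locale odd_weight_code =
  fixes pos :: "'n::finite \<Rightarrow> nat" and N :: nat
  assumes pos_bij: "bij_betw pos UNIV {0..<N}" and two_le_N: "2 \<le> N"
begin

definition weight :: "'n \<Rightarrow> int" where
  "weight i = 2 * int (pos i) + 1"

definition alt_sign :: "'n \<Rightarrow> int" where
  "alt_sign i = (-1) ^ pos i"

definition lattice :: "('n \<Rightarrow> int) set" where
  "lattice = {x. 4 * int N dvd dot weight x}"

definition coord :: "nat \<Rightarrow> 'n" where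
  "coord = inv_into UNIV pos"

definition tile :: "('n \<Rightarrow> int) set" where
  "tile = double_sphere 0 (unit_vec (coord 0))"

definition shift :: "'n \<Rightarrow> int" where
  "shift = unit_vec (coord 0) + unit_vec (coord 1)"

definition marks :: "nat set \<Rightarrow> int set" where
  "marks A = insert 0 ((\<lambda>a. 4 * int N * (int a + 1)) ` A)"

definition offset :: "nat set \<Rightarrow> ('n \<Rightarrow> int) \<Rightarrow> ('n \<Rightarrow> int)" where
  "offset A v = (if dot alt_sign v \<in> marks A then shift else 0)"

definition code :: "nat set \<Rightarrow> ('n \<Rightarrow> int) set" where
  "code A = {v + offset A v | v. v \<in> lattice}"

lemma pos_less: "pos i < N"
  using pos_bij by (auto simp: bij_betw_def)

lemma pos_coord: "k < N \<Longrightarrow> pos (coord k) = k"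
  unfolding coord_def using pos_bij by (simp add: bij_betw_inv_into_right)

lemma weight_coord: "k < N \<Longrightarrow> weight (coord k) = 2 * int k + 1"
  by (simp add: weight_def pos_coord)

lemma alt_sign_coord: "k < N \<Longrightarrow> alt_sign (coord k) = (-1) ^ k"
  by (simp add: alt_sign_def pos_coord)

lemma weight_coord_0: "weight (coord 0) = 1"
  using two_le_N by (simp add: weight_coord)

lemma alt_sign_coord_0: "alt_sign (coord 0) = 1"
  using two_le_N by (simp add: alt_sign_coord)

lemma coord_0_ne_coord_1: "coord 0 \<noteq> coord 1"
  using pos_coord[of 0] pos_coord[of 1] two_le_N by fastforce

lemma weight_inj: "weight i = weight j \<Longrightarrow> i = j"
  using pos_bij by (auto simp: weight_def bij_betw_def inj_def)

lemma weight_pos: "0 < weight i"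
  by (simp add: weight_def)

lemma abs_weight_le: "\<bar>weight i\<bar> \<le> 2 * int N - 1"
  using pos_less[of i] by (simp add: weight_def)

lemma odd_weight: "odd (weight i)"
  by (simp add: weight_def)

lemma weight_surj:
  assumes "odd t" "0 < t" "t < 2 * int N"
  obtains i where "weight i = t"
proof -
  obtain k where k: "t = 2 * k + 1"
    using assms(1) oddE by blast
  with assms(2,3) have "nat k < N" "t = 2 * int (nat k) + 1"
    by auto
  then have "weight (coord (nat k)) = t"
    by (simp add: weight_coord)
  then show ?thesis
    by (rule that)
qed

lemma abs_alt_sign: "\<bar>alt_sign i\<bar> = 1"
  by (simp add: alt_sign_def)

lemma odd_alt_sign: "odd (alt_sign i)"
  by (simp add: alt_sign_def)

lemma weight_alt_sign_mod_4: "4 dvd weight i + alt_sign i - 2"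
proof (cases "even (pos i)")
  case True
  then obtain k where "pos i = 2 * k" by blast
  then show ?thesis by (simp add: weight_def alt_sign_def)
next
  case False
  then obtain k where "pos i = 2 * k + 1" using oddE by blast
  then show ?thesis by (simp add: weight_def alt_sign_def)
qed

text \<open>Since weight i + alt_sign i is 2 modulo 4, the alternating sum S is congruent to
  twice the coordinate sum T modulo 4, and S and T both have the parity of the Lee norm;
  this rules out S = \<plusminus>2.\<close>
lemma alt_sum_eq_0_if_short:
  assumes "lee_norm z \<le> 3" "4 dvd dot weight z"
  shows "dot alt_sign z = 0"
proof -
  define S where "S = dot alt_sign z"
  define T where "T = dot (\<lambda>_. 1) z"
  have "4 dvd dot (\<lambda>i. weight i + alt_sign i) z - dot (\<lambda>_. 2) z"
    by (rule dvd_dot_diff) (rule weight_alt_sign_mod_4)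
  then have "4 dvd dot weight z + S - 2 * T"
    by (simp add: S_def T_def dot_def distrib_right sum.distrib sum_distrib_left)
  with assms(2) have "4 dvd S - 2 * T"
    by presburger
  moreover have "even (S - lee_norm z)" "even (T - lee_norm z)"
    unfolding S_def T_def by (intro even_dot_diff_lee_norm; simp add: odd_alt_sign)+
  then have "even (S - T)"
    by presburger
  moreover have "\<bar>S\<bar> \<le> 3"
    using abs_dot_le[of alt_sign 1 z] abs_alt_sign assms(1) by (simp add: S_def)
  ultimately show ?thesis
    unfolding S_def[symmetric] by presburger
qed

text \<open>Parity forces Lee norm 2, the size of the weights then forces weighted sum 0, and two
  distinct positive weights cannot cancel.\<close>
lemma lattice_short_eq_0:
  assumes "d \<in> lattice" "lee_norm d \<le> 3"
  shows "d = 0"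
proof (rule ccontr)
  assume "d \<noteq> 0"
  have dvd: "4 * int N dvd dot weight d"
    using assms(1) by (simp add: lattice_def)
  then have "4 dvd dot weight d"
    using dvd_mult_left by blast
  moreover have "even (dot weight d - lee_norm d)"
    by (intro even_dot_diff_lee_norm odd_weight)
  moreover have "lee_norm d \<noteq> 0"
    using \<open>d \<noteq> 0\<close> lee_norm_eq_0_iff by blast
  ultimately have norm_2: "lee_norm d = 2"
    using assms(2) lee_norm_nonneg[of d] by presburger
  have "\<bar>dot weight d\<bar> \<le> (2 * int N - 1) * lee_norm d"
    by (intro abs_dot_le abs_weight_le)
  also have "\<dots> < \<bar>4 * int N\<bar>"
    using norm_2 by simp
  finally have "\<bar>dot weight d\<bar> < \<bar>4 * int N\<bar>" .
  then have dot_0: "dot weight d = 0"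
    using dvd_imp_le_int[OF _ dvd] by fastforce
  obtain i j s t where st: "\<bar>s\<bar> = 1" "\<bar>t\<bar> = 1"
    and d: "d = (\<lambda>k. s * unit_vec i k) + (\<lambda>k. t * unit_vec j k)"
    using lee_norm_eq_2E[OF norm_2] .
  have "s * weight i + t * weight j = 0"
    using dot_0 by (simp add: d dot_add dot_scaled_unit_vec)
  then have "weight i = weight j \<and> t = - s"
    using st weight_pos[of i] weight_pos[of j] by (auto simp: abs_if split: if_splits)
  then have "d = 0"
    using weight_inj by (auto simp: d fun_eq_iff)
  with \<open>d \<noteq> 0\<close> show False ..
qed

lemma marks_nonneg: "m \<in> marks A \<Longrightarrow> 0 \<le> m"
  by (auto simp: marks_def)

lemma mem_tile_iff: "u \<in> tile \<longleftrightarrow> lee_norm u \<le> 1 \<or> lee_norm (u - unit_vec (coord 0)) \<le> 1"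
  by (simp add: tile_def double_sphere_def lee_sphere1_iff)

lemma zero_mem_tile: "0 \<in> tile"
  by (simp add: mem_tile_iff lee_norm_def)

lemma tile_hits_odd_residue:
  assumes "odd r" "0 \<le> r" "r < 4 * int N"
  shows "\<exists>u\<in>tile. dot weight u = r \<or> dot weight u = r - 4 * int N"
proof (cases "r < 2 * int N")
  case True
  moreover have "0 < r"
    using assms(1,2) by (cases "r = 0") auto
  ultimately obtain i where "weight i = r"
    using assms(1) by (blast intro: weight_surj)
  moreover have "unit_vec i \<in> tile"
    by (simp add: mem_tile_iff lee_norm_unit_vec)
  ultimately show ?thesis
    by (intro bexI[of _ "unit_vec i"]) (simp_all add: dot_unit_vec)
next
  case False
  then have "odd (4 * int N - r)" "0 < 4 * int N - r" "4 * int N - r < 2 * int N"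
    using assms by presburger+
  then obtain i where "weight i = 4 * int N - r"
    by (rule weight_surj)
  moreover have "- unit_vec i \<in> tile"
    by (simp add: mem_tile_iff lee_norm_minus lee_norm_unit_vec)
  ultimately show ?thesis
    by (intro bexI[of _ "- unit_vec i"]) (simp_all add: dot_minus dot_unit_vec)
qed

lemma tile_hits_even_residue:
  assumes "even r" "0 \<le> r" "r < 4 * int N"
  shows "\<exists>u\<in>tile. dot weight u = r \<or> dot weight u = r - 4 * int N"
proof -
  let ?e0 = "unit_vec (coord 0)"
  consider "r = 0" | "0 < r" "r \<le> 2 * int N" | "2 * int N < r"
    using assms(2) by linarith
  then show ?thesis
  proof cases
    case 1
    then show ?thesis
      by (intro bexI[of _ 0] zero_mem_tile) (simp add: dot_zero)
  next
    case 2
    then have "odd (r - 1)" "0 < r - 1" "r - 1 < 2 * int N"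
      using assms(1) by presburger+
    then obtain i where "weight i = r - 1"
      by (rule weight_surj)
    moreover have "?e0 + unit_vec i \<in> tile"
      by (simp add: mem_tile_iff lee_norm_unit_vec)
    ultimately show ?thesis
      by (intro bexI[of _ "?e0 + unit_vec i"]) (simp_all add: dot_add dot_unit_vec weight_coord_0)
  next
    case 3
    then have "odd (4 * int N - r + 1)" "0 < 4 * int N - r + 1" "4 * int N - r + 1 < 2 * int N"
      using assms by presburger+
    then obtain i where "weight i = 4 * int N - r + 1"
      by (rule weight_surj)
    moreover have "?e0 - unit_vec i \<in> tile"
      by (simp add: mem_tile_iff lee_norm_minus lee_norm_unit_vec)
    ultimately show ?thesis
      by (intro bexI[of _ "?e0 - unit_vec i"]) (simp_all add: dot_diff dot_unit_vec weight_coord_0)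
  qed
qed

lemma tile_hits_residue:
  obtains u where "u \<in> tile" "t mod (4 * int N) = dot weight u mod (4 * int N)"
proof -
  define r where "r = t mod (4 * int N)"
  have "0 \<le> r" "r < 4 * int N"
    using two_le_N by (simp_all add: r_def)
  then obtain u where "u \<in> tile" "dot weight u = r \<or> dot weight u = r - 4 * int N"
    using tile_hits_odd_residue tile_hits_even_residue by blast
  then show ?thesis
    by (intro that[of u]) (auto simp: r_def)
qed

lemma translate_tiling_lattice_tile: "translate_tiling lattice tile"
  unfolding translate_tiling_def
proof (intro conjI allI ballI impI)
  fix x
  obtain u where "u \<in> tile" "dot weight x mod (4 * int N) = dot weight u mod (4 * int N)"
    by (rule tile_hits_residue)
  then have "x - u \<in> lattice"
    by (simp add: lattice_def dot_diff mod_eq_dvd_iff)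
  with \<open>u \<in> tile\<close> show "\<exists>v\<in>lattice. \<exists>u\<in>tile. x = v + u"
    by (metis diff_add_cancel)
next
  fix v w u u'
  assume "v \<in> lattice" "w \<in> lattice" "u \<in> tile" "u' \<in> tile" "v + u = w + u'"
  then have "v - w = u' - u" "v - w \<in> lattice"
    by (auto simp: algebra_simps lattice_def dot_diff)
  moreover have "lee_norm (u' - u) \<le> 3"
    using double_sphere_diam[OF lee_dist_0_unit_vec] \<open>u \<in> tile\<close> \<open>u' \<in> tile\<close>
    by (simp add: tile_def lee_dist_eq_lee_norm)
  ultimately show "v = w"
    using lattice_short_eq_0 by fastforce
qed

lemma ds_copy_tile: "ds_copy tile"
  unfolding ds_copy_def tile_def
  by (intro exI[of _ id] exI[of _ 0] exI[of _ "unit_vec (coord 0)"])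
     (simp add: lee_isometry_def lee_dist_0_unit_vec)

lemma shift_mem_tile: "shift \<in> tile"
  by (simp add: mem_tile_iff shift_def lee_norm_unit_vec)

lemma dot_weight_shift: "dot weight shift = 4"
  using two_le_N by (simp add: shift_def dot_add dot_unit_vec weight_coord)

lemma dot_alt_sign_shift: "dot alt_sign shift = 0"
  using two_le_N by (simp add: shift_def dot_add dot_unit_vec alt_sign_coord)

lemma shift_ne_0: "shift \<noteq> 0"
proof
  assume "shift = 0"
  then have "shift (coord 0) = 0"
    by simp
  then show False
    using coord_0_ne_coord_1 by (simp add: shift_def unit_vec_def)
qed

lemma offset_mem_tile: "offset A v \<in> tile"
  by (simp add: offset_def shift_mem_tile zero_mem_tile)

lemma dvd_dot_weight_offset: "4 dvd dot weight (offset A v)"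
  by (simp add: offset_def dot_weight_shift dot_zero)

lemma dot_alt_sign_offset: "dot alt_sign (offset A v) = 0"
  by (simp add: offset_def dot_alt_sign_shift dot_zero)

lemma code_lee_dist:
  assumes "v \<in> lattice" "w \<in> lattice" and ne: "v + offset A v \<noteq> w + offset A w"
  shows "4 \<le> lee_dist (v + offset A v) (w + offset A w)"
proof (rule ccontr)
  define z where "z = (v + offset A v) - (w + offset A w)"
  assume "\<not> ?thesis"
  then have short: "lee_norm z \<le> 3"
    by (simp add: z_def lee_dist_eq_lee_norm)
  have "4 dvd dot weight v" "4 dvd dot weight w"
    using assms(1,2) by (auto simp: lattice_def intro: dvd_mult_left)
  then have "4 dvd dot weight z"
    using dvd_dot_weight_offset by (simp add: z_def dot_diff dot_add)
  then have "dot alt_sign z = 0"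
    by (rule alt_sum_eq_0_if_short[OF short])
  then have "dot alt_sign v = dot alt_sign w"
    by (simp add: z_def dot_diff dot_add dot_alt_sign_offset)
  then have "offset A v = offset A w"
    by (simp add: offset_def)
  then have "z = v - w" "v - w \<in> lattice"
    using assms(1,2) by (simp_all add: z_def lattice_def dot_diff)
  then have "v + offset A v = w + offset A w"
    using short lattice_short_eq_0 \<open>offset A v = offset A w\<close> by fastforce
  with ne show False ..
qed

lemma diam4_perfect_lee_code_code: "diam4_perfect_lee_code (code A)"
  unfolding code_def
  by (rule diam4_perfect_lee_code_of_translate_tiling[OF translate_tiling_lattice_tile ds_copy_tile])
     (simp_all add: offset_mem_tile code_lee_dist)

lemma add_mem_code_iff:
  assumes "v \<in> lattice" "u \<in> tile"
  shows "v + u \<in> code A \<longleftrightarrow> u = offset A v"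
proof
  assume "v + u \<in> code A"
  then obtain w where "w \<in> lattice" "v + u = w + offset A w"
    by (auto simp: code_def)
  with assms show "u = offset A v"
    using translate_tiling_unique[OF translate_tiling_lattice_tile] offset_mem_tile by metis
qed (use assms(1) in \<open>auto simp: code_def\<close>)

lemma lattice_multiple_of_unit_vec:
  "(\<lambda>j. 4 * int N * m * unit_vec (coord 0) j) \<in> lattice"
  by (simp add: lattice_def dot_scaled_unit_vec weight_coord_0)

lemma zero_notin_code: "0 \<notin> code A"
proof -
  have "0 \<in> lattice"
    by (simp add: lattice_def dot_zero)
  moreover have "offset A 0 = shift"
    by (simp add: offset_def marks_def dot_zero)
  ultimately show ?thesis
    using add_mem_code_iff[of 0 0 A] zero_mem_tile shift_ne_0 by simp
qed

lemma not_periodic_code: "\<not> periodic_set (code A)"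
proof
  assume "periodic_set (code A)"
  then obtain p :: int where "p > 0"
    and period: "\<And>s i k. s \<in> code A \<Longrightarrow> s + (\<lambda>j. int k * p * unit_vec i j) \<in> code A"
    by (rule periodic_setE) blast
  define x where "x = (\<lambda>j. 4 * int N * (- p) * unit_vec (coord 0) j)"
  have "x \<in> lattice"
    unfolding x_def by (rule lattice_multiple_of_unit_vec)
  have "dot alt_sign x < 0"
    unfolding x_def dot_scaled_unit_vec alt_sign_coord_0 using \<open>p > 0\<close> two_le_N by simp
  then have "offset A x = 0"
    using marks_nonneg by (force simp: offset_def)
  then have "x \<in> code A"
    using add_mem_code_iff[OF \<open>x \<in> lattice\<close> zero_mem_tile] by simp
  then have "x + (\<lambda>j. int (4 * N) * p * unit_vec (coord 0) j) \<in> code A"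
    by (rule period)
  moreover have "x + (\<lambda>j. int (4 * N) * p * unit_vec (coord 0) j) = 0"
    by (simp add: x_def fun_eq_iff)
  ultimately show False
    using zero_notin_code by simp
qed

lemma inj_code: "inj code"
proof (rule injI)
  fix A B
  assume eq: "code A = code B"
  have "a \<in> A \<longleftrightarrow> a \<in> B" for a
  proof -
    define v where "v = (\<lambda>j. 4 * int N * (int a + 1) * unit_vec (coord 0) j)"
    have "v \<in> lattice"
      unfolding v_def by (rule lattice_multiple_of_unit_vec)
    moreover have "dot alt_sign v \<in> marks C \<longleftrightarrow> a \<in> C" for C
      using two_le_N by (auto simp: v_def dot_scaled_unit_vec alt_sign_coord_0 marks_def)
    ultimately have "a \<in> C \<longleftrightarrow> v + shift \<in> code C" for C
      using add_mem_code_iff[OF _ shift_mem_tile] shift_ne_0 by (simp add: offset_def)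
    with eq show ?thesis
      by blast
  qed
  then show "A = B"
    by blast
qed

end

theorem corollary2:
  assumes "card (UNIV :: 'n::finite set) \<ge> 2"
  shows "{L :: ('n \<Rightarrow> int) set. diam4_perfect_lee_code L \<and> \<not> periodic_set L}
           \<approx> (UNIV :: nat set set)"
proof (rule lepoll_antisym)
  obtain pos :: "'n \<Rightarrow> nat" where "bij_betw pos UNIV {0..<card (UNIV :: 'n set)}"
    using ex_bij_betw_finite_nat[OF finite_UNIV] by blast
  then interpret odd_weight_code pos "card (UNIV :: 'n set)"
    using assms by unfold_locales
  show "(UNIV :: nat set set) \<lesssim> {L :: ('n \<Rightarrow> int) set. diam4_perfect_lee_code L \<and> \<not> periodic_set L}"
    unfolding lepoll_def
    by (rule exI[of _ code]) (auto simp: inj_code diam4_perfect_lee_code_code not_periodic_code)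
qed (rule lepoll_nat_set_set)

end
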